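(* Fix an irrational $\alpha\in(0,1)$. (i) Let $w\in W_\alpha$. If $|w|<|s_n|$ for some $n\in\mathbb{N}$ with $n\ge2$, then $w$ is a subword of $s_{n+2}$. (ii) Let $w\in W_\alpha$ be a subword of $s_n$ for some $n\in\mathbb{N}$. Then there exist words $x,y\in W_\alpha$ with $xwy=s_{n+3}$ and $|x|,|y|\ge|s_{n+1}|$.
   Context: Let $\alpha=[a_1,a_2,\dots]$ be the continued fraction expansion of $\alpha$. Define words over $\{0,1\}$ by $s_{-1}=1$, $s_0=0$, $s_1=s_0^{a_1-1}s_{-1}$, $s_n=s_{n-1}^{a_n}s_{n-2}$ for $n\ge2$. For $\theta\in[0,1)$, $v_{\alpha,\theta}$ is the two-sided infinite word with letters $v_{\alpha,\theta}(n)=\chi_{[1-\alpha,1)}(n\alpha+\theta\bmod1)$, $n\in\mathbb{Z}$; $W_\alpha$ is the set of all finite non-empty subwords of the words $v_{\alpha,\theta}$, $\theta\in[0,1)$. $|w|$ denotes the length of a word $w$. $\mathbb{N}=\{1,2,\dots\}$. *)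

theory Defs
  imports Complex_Main "HOL-Library.Sublist"
begin

text \<open>Continued fraction expansion alpha = [a_1, a_2, ...] (i.e. [0; a_1, a_2, ...])
  of alpha in (0,1) via the Gauss map: cf_rest alpha 0 = alpha,
  cf_rest alpha (k+1) = frac (1 / cf_rest alpha k), and a_n = floor (1 / cf_rest alpha (n-1)).\<close>

fun cf_rest :: "real \<Rightarrow> nat \<Rightarrow> real" where
  "cf_rest \<alpha> 0 = \<alpha>"
| "cf_rest \<alpha> (Suc k) = frac (1 / cf_rest \<alpha> k)"

definition cf_digit :: "real \<Rightarrow> nat \<Rightarrow> nat" where
  "cf_digit \<alpha> n = nat \<lfloor>1 / cf_rest \<alpha> (n - 1)\<rfloor>"

text \<open>Standard words: s_{-1} = 1, s_0 = 0, s_1 = s_0^{a_1 - 1} s_{-1},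
  s_n = s_{n-1}^{a_n} s_{n-2} for n >= 2. Words are lists over {0,1} (as nat).\<close>

fun std_word :: "real \<Rightarrow> nat \<Rightarrow> nat list" where
  "std_word \<alpha> 0 = [0]"
| "std_word \<alpha> (Suc 0) = concat (replicate (cf_digit \<alpha> 1 - 1) [0]) @ [1]"
| "std_word \<alpha> (Suc (Suc k)) =
     concat (replicate (cf_digit \<alpha> (k + 2)) (std_word \<alpha> (k + 1))) @ std_word \<alpha> k"

definition sturm :: "real \<Rightarrow> real \<Rightarrow> int \<Rightarrow> nat" where
  "sturm \<alpha> \<theta> n = (if frac (of_int n * \<alpha> + \<theta>) \<in> {1 - \<alpha>..<1} then 1 else 0)"

definition W :: "real \<Rightarrow> nat list set" where
  "W \<alpha> = {w. w \<noteq> [] \<and> (\<exists>\<theta>\<in>{0..<1}. \<exists>m::int.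
            w = map (\<lambda>i. sturm \<alpha> \<theta> (m + int i)) [0..<length w])}"

end

theory Submission
  imports Defs "HOL-Analysis.Kronecker_Approximation_Theorem"
begin

(* The standard words s_n, n \<ge> 1, are prefixes of the characteristic word c_\<alpha>, whose k-th
   letter is \<lfloor>(k+2)\<alpha>\<rfloor> - \<lfloor>(k+1)\<alpha>\<rfloor>: if \<alpha> = 1/(a_1 + \<beta>), the morphism 0 \<mapsto> 0^{a_1-1}1,
   1 \<mapsto> 0^{a_1-1}10 sends s_n(\<beta>) to s_{n+1}(\<alpha>) and c_\<beta> to c_\<alpha>. By Kronecker's theorem every
   word of W_\<alpha> occurs in c_\<alpha>, hence in some s_K, and every factor of c_\<alpha> lies in W_\<alpha>.
   For (i), an occurrence in s_{j+3} = s_{j+2}^a s_{j+1} of a word no longer than s_j either lies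
   in one block or straddles two blocks; a straddling one lies in s_j s_{j+1}, which coincides
   with s_{j+1} s_j, a factor of s_{j+2}, except in its last two letters. So the word descends
   step by step to s_{n+2}. For (ii), x and y are read off from s_{n+3} = s_{n+2}^{a_{n+3}} s_{n+1}
   and s_{n+2} = s_{n+1}^{a_{n+2}} s_n. *)

definition irrational_unit :: "real \<Rightarrow> bool" where
  "irrational_unit \<alpha> \<longleftrightarrow> \<alpha> \<notin> \<rat> \<and> 0 < \<alpha> \<and> \<alpha> < 1"

lemma irrational_unit_frac_inverse:
  assumes "irrational_unit r"
  shows "irrational_unit (frac (1 / r))" and "1 \<le> \<lfloor>1 / r\<rfloor>"
proof -
  have r: "r \<notin> \<rat>" "0 < r" "r < 1" using assms by (auto simp: irrational_unit_def)
  then show "1 \<le> \<lfloor>1 / r\<rfloor>" by (simp add: le_floor_iff)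
  have "1 / r \<notin> \<rat>"
    using r(1) by (metis Rats_divide Rats_1 divide_divide_eq_right div_by_1 mult_1)
  then have "frac (1 / r) \<notin> \<rat>"
    by (metis Rats_add Rats_of_int diff_add_cancel frac_def)
  moreover from this have "frac (1 / r) \<noteq> 0" by (metis Rats_0)
  ultimately show "irrational_unit (frac (1 / r))"
    unfolding irrational_unit_def using frac_ge_0[of "1 / r"] frac_lt_1[of "1 / r"] by auto
qed

lemma irrational_unit_cf_rest: "irrational_unit \<alpha> \<Longrightarrow> irrational_unit (cf_rest \<alpha> k)"
  by (induction k) (auto intro: irrational_unit_frac_inverse)

lemma cf_rest_Suc_shift: "cf_rest \<alpha> (Suc k) = cf_rest (cf_rest \<alpha> 1) k"
  by (induction k) auto

lemma cf_digit_Suc_shift: "1 \<le> k \<Longrightarrow> cf_digit \<alpha> (Suc k) = cf_digit (cf_rest \<alpha> 1) k"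
  unfolding cf_digit_def using cf_rest_Suc_shift[of \<alpha> "k - 1"] by simp

lemma cf_digit_pos: "irrational_unit \<alpha> \<Longrightarrow> 1 \<le> k \<Longrightarrow> 0 < cf_digit \<alpha> k"
  unfolding cf_digit_def
  using irrational_unit_frac_inverse(2)[OF irrational_unit_cf_rest[of \<alpha> "k - 1"]] by linarith

lemma cf_first_digit_expansion:
  assumes "irrational_unit \<alpha>"
  shows "\<alpha> = 1 / (real (cf_digit \<alpha> 1) + cf_rest \<alpha> 1)"
proof -
  have "0 \<le> \<lfloor>1 / \<alpha>\<rfloor>" using irrational_unit_frac_inverse(2)[OF assms] by linarith
  then have "real (cf_digit \<alpha> 1) = of_int \<lfloor>1 / \<alpha>\<rfloor>"
    unfolding cf_digit_def by simp
  then have "real (cf_digit \<alpha> 1) + cf_rest \<alpha> 1 = 1 / \<alpha>" by (simp add: frac_def)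
  then show ?thesis by simp
qed

abbreviation word_pow :: "nat \<Rightarrow> 'a list \<Rightarrow> 'a list" where
  "word_pow d s \<equiv> concat (replicate d s)"

lemma word_pow_append_commute: "word_pow d s @ s = s @ word_pow d s"
  by (induction d) auto

lemma word_pow_pos: "0 < d \<Longrightarrow> word_pow d s = s @ word_pow (d - 1) s"
  by (cases d) auto

lemma length_word_pow [simp]: "length (word_pow d s) = d * length s"
  by (simp add: length_concat sum_list_replicate)

lemma std_word_rec:
  "std_word \<alpha> (k + 2) = word_pow (cf_digit \<alpha> (k + 2)) (std_word \<alpha> (k + 1)) @ std_word \<alpha> k"
  by simp

lemma std_word_nonempty: "std_word \<alpha> n \<noteq> []"
  by (induction \<alpha> n rule: std_word.induct) auto

lemma prefix_std_word_Suc: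
  assumes "irrational_unit \<alpha>" "1 \<le> n"
  shows "prefix (std_word \<alpha> n) (std_word \<alpha> (Suc n))"
proof -
  obtain m where m: "n = Suc m" using assms(2) by (cases n) auto
  have "0 < cf_digit \<alpha> (m + 2)" by (rule cf_digit_pos[OF assms(1)]) simp
  then show ?thesis using m by (simp add: word_pow_pos)
qed

lemma length_std_word_less:
  assumes "irrational_unit \<alpha>" "1 \<le> n"
  shows "length (std_word \<alpha> n) < length (std_word \<alpha> (Suc n))"
proof -
  obtain m where m: "n = Suc m" using assms(2) by (cases n) auto
  have "0 < cf_digit \<alpha> (m + 2)" by (rule cf_digit_pos[OF assms(1)]) simp
  then show ?thesis using m std_word_nonempty[of \<alpha> m] by (simp add: word_pow_pos)
qed

lemma length_std_word_Suc_mono: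
  assumes "irrational_unit \<alpha>"
  shows "length (std_word \<alpha> n) \<le> length (std_word \<alpha> (Suc n))"
proof (cases n)
  case 0
  then show ?thesis using cf_digit_pos[OF assms, of 1] by simp
next
  case (Suc m)
  then show ?thesis using length_std_word_less[OF assms, of n] by simp
qed

lemma length_std_word_mono:
  assumes "irrational_unit \<alpha>" "m \<le> n"
  shows "length (std_word \<alpha> m) \<le> length (std_word \<alpha> n)"
  using assms(2)
  by (induction n rule: dec_induct) (use length_std_word_Suc_mono[OF assms(1)] in \<open>auto intro: le_trans\<close>)

lemma length_std_word_ge:
  assumes "irrational_unit \<alpha>" "1 \<le> n"
  shows "n \<le> length (std_word \<alpha> n)"
  using assms(2)
proof (induction n rule: dec_induct)
  case base
  then show ?case using std_word_nonempty[of \<alpha> 1] by (cases "std_word \<alpha> 1") auto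
next
  case (step n)
  then show ?case using length_std_word_less[OF assms(1), of n] by simp
qed

lemma std_word_append_swap:
  "\<exists>u x y. std_word \<alpha> (Suc m) @ std_word \<alpha> m = u @ [x, y]
         \<and> std_word \<alpha> m @ std_word \<alpha> (Suc m) = u @ [y, x]"
proof (induction m)
  case 0
  let ?u = "replicate (cf_digit \<alpha> 1 - 1) (0::nat)"
  have "std_word \<alpha> 1 = ?u @ [1]" by simp
  then have "std_word \<alpha> 1 @ std_word \<alpha> 0 = ?u @ [1, 0]"
    and "std_word \<alpha> 0 @ std_word \<alpha> 1 = ?u @ [0, 1]"
    by (simp_all add: replicate_append_same[symmetric])
  then show ?case by auto
next
  case (Suc m)
  then obtain u x y where u: "std_word \<alpha> (Suc m) @ std_word \<alpha> m = u @ [x, y]"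
    "std_word \<alpha> m @ std_word \<alpha> (Suc m) = u @ [y, x]" by blast
  let ?s = "std_word \<alpha> (Suc m)" and ?p = "word_pow (cf_digit \<alpha> (m + 2)) (std_word \<alpha> (Suc m))"
  have "std_word \<alpha> (Suc (Suc m)) @ ?s = (?p @ u) @ [y, x]"
    using u(2) by simp
  moreover have "?s @ std_word \<alpha> (Suc (Suc m)) = (?s @ ?p) @ std_word \<alpha> m" by simp
  then have "?s @ std_word \<alpha> (Suc (Suc m)) = (?p @ u) @ [x, y]"
    using u(1) by (simp only: word_pow_append_commute[symmetric] append_assoc)
  ultimately show ?case by blast
qed

lemma sublist_word_pow_append:
  fixes A B w :: "'a list"
  assumes "prefix B A" and "L \<le> length B" and "length w \<le> L"
    and straddle: "\<And>x y. x \<noteq> [] \<Longrightarrow> suffix x A \<Longrightarrow> prefix y B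
               \<Longrightarrow> length (x @ y) \<le> L \<Longrightarrow> sublist (x @ y) A"
  shows "sublist w (word_pow e A @ B) \<Longrightarrow> sublist w A"
proof (induction e)
  case 0
  then show ?case using assms(1) by (auto intro: sublist_order.order_trans prefix_imp_sublist)
next
  case (Suc e)
  have prefix_B: "prefix B (word_pow e A @ B)"
    using assms(1) by (cases e) (auto intro: prefix_order.order_trans)
  from Suc.prems consider "sublist w A" | "sublist w (word_pow e A @ B)"
    | x y where "w = x @ y" "suffix x A" "prefix y (word_pow e A @ B)"
    by (auto simp: sublist_append)
  then show ?case
  proof cases
    case 3
    show ?thesis
    proof (cases "x = []")
      case True
      then show ?thesis using 3 Suc.IH by (auto intro: prefix_imp_sublist)
    next
      case False
      have "length y \<le> length B" using assms(2,3) 3(1) by simp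
      then have "prefix y B" using prefix_B 3(3) prefix_length_prefix by blast
      then show ?thesis using straddle 3 False assms(3) by blast
    qed
  qed (use Suc.IH in auto)
qed

lemma sublist_std_word_straddle:
  assumes \<alpha>: "irrational_unit \<alpha>" and "1 \<le> j"
    and "x \<noteq> []" and "suffix x (std_word \<alpha> (Suc (Suc j)))"
    and "prefix y (std_word \<alpha> (Suc j))"
    and len: "length (x @ y) \<le> length (std_word \<alpha> j)"
  shows "sublist (x @ y) (std_word \<alpha> (Suc (Suc j)))"
proof -
  let ?A = "std_word \<alpha> (Suc (Suc j))" and ?B = "std_word \<alpha> (Suc j)" and ?C = "std_word \<alpha> j"
  let ?d = "cf_digit \<alpha> (j + 2)"
  have "0 < ?d" by (rule cf_digit_pos[OF \<alpha>]) simp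
  then have A: "?A = word_pow (?d - 1) ?B @ (?B @ ?C)"
    by (simp add: word_pow_pos word_pow_append_commute)
  have "suffix x (word_pow ?d ?B @ ?C)" using assms(4) by simp
  moreover have "length x \<le> length ?C" using len by simp
  ultimately have "suffix x ?C" by (meson suffixI suffix_length_suffix)
  then obtain c where c: "?C = c @ x" by (auto simp: suffix_def)
  obtain b where b: "?B = y @ b" using assms(5) by (auto simp: prefix_def)
  obtain u s t where u: "?B @ ?C = u @ [s, t]" "?C @ ?B = u @ [t, s]"
    using std_word_append_swap[of \<alpha> j] by blast
  have "length ?C < length ?B" by (rule length_std_word_less[OF \<alpha> assms(2)])
  then have "length (c @ x @ y) \<le> length u"
    using arg_cong[OF u(1), of length] len c assms(3) by (cases x) auto
  moreover have "(c @ x @ y) @ b = u @ [t, s]" using u(2) c b by simp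
  ultimately have "prefix (c @ x @ y) u"
    by (metis prefixI prefix_length_prefix prefix_append)
  then have "sublist (x @ y) u"
    by (meson sublist_append_leftI prefix_imp_sublist sublist_order.order_trans)
  moreover have "sublist u ?A" using A u(1) by (metis append.assoc sublist_appendI)
  ultimately show ?thesis by (rule sublist_order.order_trans)
qed

lemma sublist_std_word_descend:
  assumes \<alpha>: "irrational_unit \<alpha>" and "1 \<le> n"
    and len: "length w \<le> length (std_word \<alpha> n)"
    and "n + 2 \<le> K" and "sublist w (std_word \<alpha> K)"
  shows "sublist w (std_word \<alpha> (n + 2))"
  using assms(4,5)
proof (induction K rule: dec_induct)
  case (step K)
  define j where "j = K - 2"
  have K: "K = Suc (Suc j)" and "n \<le> j" using step.hyps(1) unfolding j_def by arith+
  have "1 \<le> j" using \<open>n \<le> j\<close> assms(2) by simp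
  have "length w \<le> length (std_word \<alpha> j)"
    using len length_std_word_mono[OF \<alpha> \<open>n \<le> j\<close>] by simp
  moreover have
    "sublist w (word_pow (cf_digit \<alpha> (Suc j + 2)) (std_word \<alpha> K) @ std_word \<alpha> (Suc j))"
    using step.prems std_word_rec[of \<alpha> "Suc j"] K by simp
  moreover have "prefix (std_word \<alpha> (Suc j)) (std_word \<alpha> (Suc (Suc j)))"
    by (rule prefix_std_word_Suc[OF \<alpha>]) simp
  ultimately have "sublist w (std_word \<alpha> K)"
    unfolding K
    by (intro sublist_word_pow_append[OF _ length_std_word_Suc_mono[OF \<alpha>] _
          sublist_std_word_straddle[OF \<alpha> \<open>1 \<le> j\<close>]])
  then show ?case by (rule step.IH)
qed

lemma std_word_factor_extension:
  assumes \<alpha>: "irrational_unit \<alpha>" and "sublist w (std_word \<alpha> n)"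
  shows "\<exists>x y. x @ w @ y = std_word \<alpha> (n + 3)
           \<and> length (std_word \<alpha> (n + 1)) \<le> length x \<and> length (std_word \<alpha> (n + 1)) \<le> length y"
proof -
  obtain p q where pq: "std_word \<alpha> n = p @ w @ q" using assms(2) by (auto simp: sublist_def)
  let ?a2 = "cf_digit \<alpha> (n + 2)" and ?a3 = "cf_digit \<alpha> (n + 3)"
  have "0 < ?a2" "0 < ?a3" using cf_digit_pos[OF \<alpha>] by auto
  let ?x = "word_pow ?a2 (std_word \<alpha> (n + 1)) @ p"
    and ?y = "q @ word_pow (?a3 - 1) (std_word \<alpha> (n + 2)) @ std_word \<alpha> (n + 1)"
  have idx: "n + 1 + 2 = n + 3" "n + 1 + 1 = n + 2" by simp_all
  have "std_word \<alpha> (n + 3) = word_pow ?a3 (std_word \<alpha> (n + 2)) @ std_word \<alpha> (n + 1)"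
    using std_word_rec[of \<alpha> "n + 1"] unfolding idx .
  then have "?x @ w @ ?y = std_word \<alpha> (n + 3)"
    by (simp only: std_word_rec pq word_pow_pos[OF \<open>0 < ?a3\<close>] append_assoc)
  moreover have "length (std_word \<alpha> (n + 1)) \<le> length ?x"
    using \<open>0 < ?a2\<close> by (cases ?a2) (simp_all del: std_word.simps)
  moreover have "length (std_word \<alpha> (n + 1)) \<le> length ?y" by simp
  ultimately show ?thesis by blast
qed

definition mech_letter :: "real \<Rightarrow> real \<Rightarrow> nat" where
  "mech_letter \<alpha> y = nat (\<lfloor>y + \<alpha>\<rfloor> - \<lfloor>y\<rfloor>)"

(* mech_word \<alpha> \<alpha> N is the prefix of length N of the characteristic word c_\<alpha>. *)
definition mech_word :: "real \<Rightarrow> real \<Rightarrow> nat \<Rightarrow> nat list" where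
  "mech_word \<alpha> x L = map (\<lambda>i. mech_letter \<alpha> (x + real i * \<alpha>)) [0..<L]"

lemma mech_letter_eq_if:
  assumes "0 \<le> \<alpha>" "\<alpha> \<le> 1"
  shows "mech_letter \<alpha> y = (if 1 - \<alpha> \<le> frac y then 1 else 0)"
proof -
  have "\<lfloor>y + \<alpha>\<rfloor> = \<lfloor>(frac y + \<alpha>) + of_int \<lfloor>y\<rfloor>\<rfloor>" by (simp add: frac_def)
  then have "\<lfloor>y + \<alpha>\<rfloor> - \<lfloor>y\<rfloor> = \<lfloor>frac y + \<alpha>\<rfloor>" by (simp only: floor_add_int[symmetric])
  moreover have "\<lfloor>frac y + \<alpha>\<rfloor> = (if 1 - \<alpha> \<le> frac y then 1 else 0)"
    using assms frac_ge_0[of y] frac_lt_1[of y] by (simp add: floor_eq_iff)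
  ultimately show ?thesis by (simp add: mech_letter_def)
qed

lemma sturm_eq_mech_letter:
  "0 \<le> \<alpha> \<Longrightarrow> \<alpha> \<le> 1 \<Longrightarrow> sturm \<alpha> \<theta> n = mech_letter \<alpha> (of_int n * \<alpha> + \<theta>)"
  by (simp add: sturm_def mech_letter_eq_if frac_lt_1)

lemma mech_letter_add_int: "mech_letter \<alpha> (y + of_int k) = mech_letter \<alpha> y"
proof -
  have "y + of_int k + \<alpha> = (y + \<alpha>) + of_int k" by simp
  then show ?thesis by (simp only: mech_letter_def floor_add_int) simp
qed

lemma length_mech_word [simp]: "length (mech_word \<alpha> x L) = L"
  by (simp add: mech_word_def)

lemma nth_mech_word: "i < L \<Longrightarrow> mech_word \<alpha> x L ! i = mech_letter \<alpha> (x + real i * \<alpha>)"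
  by (simp add: mech_word_def)

lemma mech_word_Suc:
  "mech_word \<alpha> x (Suc L) = mech_word \<alpha> x L @ [mech_letter \<alpha> (x + real L * \<alpha>)]"
  by (simp add: mech_word_def)

lemma mech_word_add:
  "mech_word \<alpha> x (L1 + L2) = mech_word \<alpha> x L1 @ mech_word \<alpha> (x + real L1 * \<alpha>) L2"
  by (rule nth_equalityI) (auto simp: nth_mech_word nth_append algebra_simps)

lemma take_mech_word: "L \<le> L' \<Longrightarrow> take L (mech_word \<alpha> x L') = mech_word \<alpha> x L"
  by (rule nth_equalityI) (auto simp: nth_mech_word)

lemma drop_mech_word: "drop k (mech_word \<alpha> x L) = mech_word \<alpha> (x + real k * \<alpha>) (L - k)"
  by (rule nth_equalityI) (auto simp: nth_mech_word algebra_simps)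

lemma mech_word_add_int: "mech_word \<alpha> (x + of_int k) L = mech_word \<alpha> x L"
proof -
  have "mech_letter \<alpha> (x + of_int k + real i * \<alpha>) = mech_letter \<alpha> (x + real i * \<alpha>)" for i
    using mech_letter_add_int[of \<alpha> "x + real i * \<alpha>" k] by (simp add: algebra_simps)
  then show ?thesis by (simp add: mech_word_def)
qed

lemma sublist_mech_word:
  assumes "sublist w (mech_word \<alpha> x L)"
  shows "\<exists>x'. w = mech_word \<alpha> x' (length w)"
proof -
  obtain p s where ps: "mech_word \<alpha> x L = p @ w @ s" using assms by (auto simp: sublist_def)
  then have "w = take (length w) (drop (length p) (mech_word \<alpha> x L))" by simp
  also have "\<dots> = mech_word \<alpha> (x + real (length p) * \<alpha>) (length w)"
    using arg_cong[OF ps, of length] by (simp add: drop_mech_word take_mech_word)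
  finally show ?thesis by blast
qed

lemma W_eq_mech_words:
  assumes "0 \<le> \<alpha>" "\<alpha> \<le> 1"
  shows "W \<alpha> = {mech_word \<alpha> x L | x L. 0 < L}"
proof (intro set_eqI iffI)
  have sturm_map:
    "map (\<lambda>i. sturm \<alpha> \<theta> (m + int i)) [0..<L] = mech_word \<alpha> (of_int m * \<alpha> + \<theta>) L" for \<theta> m L
    using assms by (simp add: mech_word_def sturm_eq_mech_letter algebra_simps)
  fix w
  show "w \<in> {mech_word \<alpha> x L | x L. 0 < L}" if w: "w \<in> W \<alpha>"
  proof -
    obtain \<theta> m where "w \<noteq> []" "w = map (\<lambda>i. sturm \<alpha> \<theta> (m + int i)) [0..<length w]"
      using w unfolding W_def by blast
    then have "w = mech_word \<alpha> (of_int m * \<alpha> + \<theta>) (length w) \<and> 0 < length w"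
      by (simp add: sturm_map)
    then show ?thesis by blast
  qed
  show "w \<in> W \<alpha>" if w: "w \<in> {mech_word \<alpha> x L | x L. 0 < L}"
  proof -
    obtain x L where w: "w = mech_word \<alpha> x L" "0 < L" using w by blast
    have "mech_word \<alpha> x L = mech_word \<alpha> (frac x) L"
      using mech_word_add_int[of \<alpha> "frac x" "\<lfloor>x\<rfloor>" L] by (simp add: frac_def)
    then have "w = map (\<lambda>i. sturm \<alpha> (frac x) (0 + int i)) [0..<length w]"
      using w sturm_map[of "frac x" 0 L] by simp
    moreover have "w \<noteq> []" using w by (metis length_mech_word length_greater_0_conv)
    ultimately show ?thesis
      unfolding W_def using frac_ge_0[of x] frac_lt_1[of x]
      by (auto intro!: bexI[of _ "frac x"] exI[of _ 0])
  qed
qed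

lemma mech_letter_right_const:
  "\<exists>d>0. \<forall>s. 0 \<le> s \<longrightarrow> s < d \<longrightarrow> mech_letter \<alpha> (y + s) = mech_letter \<alpha> y"
proof -
  define d where "d = min (of_int \<lfloor>y\<rfloor> + 1 - y) (of_int \<lfloor>y + \<alpha>\<rfloor> + 1 - (y + \<alpha>))"
  have "0 < d" unfolding d_def by linarith
  moreover have "mech_letter \<alpha> (y + s) = mech_letter \<alpha> y" if "0 \<le> s" "s < d" for s
  proof -
    have "\<lfloor>y + s\<rfloor> = \<lfloor>y\<rfloor>" "\<lfloor>y + s + \<alpha>\<rfloor> = \<lfloor>y + \<alpha>\<rfloor>"
      using that unfolding d_def by (simp_all add: floor_eq_iff) linarith+
    then show ?thesis by (simp add: mech_letter_def)
  qed
  ultimately show ?thesis by blast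
qed

lemma mech_word_right_const:
  "\<exists>d>0. \<forall>s. 0 \<le> s \<longrightarrow> s < d \<longrightarrow> mech_word \<alpha> (x + s) L = mech_word \<alpha> x L"
proof (induction L)
  case 0
  show ?case by (rule exI[of _ 1]) (simp add: mech_word_def)
next
  case (Suc L)
  then obtain d where
    d: "0 < d" "\<And>s. 0 \<le> s \<Longrightarrow> s < d \<Longrightarrow> mech_word \<alpha> (x + s) L = mech_word \<alpha> x L"
    by blast
  obtain e where e: "0 < e"
    "\<And>s. 0 \<le> s \<Longrightarrow> s < e
      \<Longrightarrow> mech_letter \<alpha> (x + real L * \<alpha> + s) = mech_letter \<alpha> (x + real L * \<alpha>)"
    using mech_letter_right_const by blast
  have "mech_word \<alpha> (x + s) (Suc L) = mech_word \<alpha> x (Suc L)" if "0 \<le> s" "s < min d e" for s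
    using that d(2) e(2)[of s] by (simp add: mech_word_Suc algebra_simps)
  then show ?case using d(1) e(1) by (intro exI[of _ "min d e"]) auto
qed

lemma irrational_multiple_near_right:
  assumes "\<alpha> \<notin> \<rat>" "0 < \<delta>"
  shows "\<exists>k s K. 0 < k \<and> 0 \<le> s \<and> s < \<delta> \<and> real k * \<alpha> = x + s + of_int K"
proof -
  define d where "d = min \<delta> (1 - frac x)"
  have d: "0 < d" "d \<le> \<delta>" "frac x + d \<le> 1" unfolding d_def using assms frac_lt_1[of x] by auto
  obtain k where k: "0 < k" "\<bar>frac (real k * \<alpha>) - (frac x + d / 2)\<bar> < d / 2"
    using Kronecker_approx_1_explicit[OF assms(1), of "frac x + d / 2" "d / 2"] d frac_ge_0[of x]
    by auto
  define s where "s = frac (real k * \<alpha>) - frac x"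
  have "0 \<le> s" "s < \<delta>" using k(2) d unfolding s_def abs_less_iff by linarith+
  moreover have "real k * \<alpha> = x + s + of_int (\<lfloor>real k * \<alpha>\<rfloor> - \<lfloor>x\<rfloor>)"
    unfolding s_def by (simp add: frac_def)
  ultimately show ?thesis using k(1) by blast
qed

lemma W_sublist_char_word:
  assumes \<alpha>: "irrational_unit \<alpha>" and "w \<in> W \<alpha>"
  shows "\<exists>N. sublist w (mech_word \<alpha> \<alpha> N)"
proof -
  have "\<alpha> \<notin> \<rat>" "0 \<le> \<alpha>" "\<alpha> \<le> 1" using \<alpha> by (auto simp: irrational_unit_def)
  then obtain x where x: "w = mech_word \<alpha> x (length w)"
    using assms(2) W_eq_mech_words by auto
  obtain d where d: "0 < d" "\<And>s. 0 \<le> s \<Longrightarrow> s < d \<Longrightarrow> mech_word \<alpha> (x + s) (length w) = w"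
    using mech_word_right_const[of \<alpha> x "length w"] x by auto
  obtain k s K where k: "0 < k" "0 \<le> s" "s < d" "real k * \<alpha> = x + s + of_int K"
    using irrational_multiple_near_right[OF \<open>\<alpha> \<notin> \<rat>\<close> d(1)] by blast
  have "mech_word \<alpha> (real k * \<alpha>) (length w) = w"
    using k mech_word_add_int[of \<alpha> "x + s" K] d(2) by simp
  moreover have "\<alpha> + real (k - 1) * \<alpha> = real k * \<alpha>"
    using k(1) by (simp add: of_nat_diff algebra_simps)
  ultimately have "mech_word \<alpha> \<alpha> (k - 1 + length w) = mech_word \<alpha> \<alpha> (k - 1) @ w"
    by (simp add: mech_word_add)
  then show ?thesis by (metis sublist_append_leftI)
qed

(* On the letters 0 and 1 this is 0 \<mapsto> 0^{a-1}1, 1 \<mapsto> 0^{a-1}10; writing the image of c as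
   0^{a-1} 1 0^c makes its length a + c. *)
definition sturm_morph :: "nat \<Rightarrow> nat list \<Rightarrow> nat list" where
  "sturm_morph a w = concat (map (\<lambda>c. replicate (a - 1) 0 @ 1 # replicate c 0) w)"

lemma sturm_morph_append [simp]: "sturm_morph a (u @ v) = sturm_morph a u @ sturm_morph a v"
  by (simp add: sturm_morph_def)

lemma sturm_morph_word_pow [simp]: "sturm_morph a (word_pow d w) = word_pow d (sturm_morph a w)"
  by (induction d) (simp_all add: sturm_morph_def)

lemma sturm_morph_replicate: "sturm_morph a (replicate d c) = word_pow d (sturm_morph a [c])"
  using sturm_morph_word_pow[of a d "[c]"] by simp

lemma length_sturm_morph: "0 < a \<Longrightarrow> length (sturm_morph a w) = a * length w + sum_list w"
  by (induction w) (auto simp: sturm_morph_def)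

lemma std_word_sturm_morph:
  "irrational_unit \<alpha>
    \<Longrightarrow> std_word \<alpha> (Suc n) = sturm_morph (cf_digit \<alpha> 1) (std_word (cf_rest \<alpha> 1) n)"
proof (induction \<alpha> n rule: std_word.induct)
  case (1 \<alpha>)
  then show ?case by (simp add: sturm_morph_def)
next
  case (2 \<alpha>)
  let ?a = "cf_digit \<alpha> 1" and ?d = "cf_digit \<alpha> (Suc (Suc 0))"
  let ?z = "replicate (?a - 1) (0::nat) @ [1]"
  have "cf_digit (cf_rest \<alpha> 1) (Suc 0) = ?d" using cf_digit_Suc_shift[of "Suc 0" \<alpha>] by simp
  moreover have "0 < ?d" using cf_digit_pos[OF "2.prems"] by simp
  ultimately have "sturm_morph ?a (std_word (cf_rest \<alpha> 1) (Suc 0))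
      = word_pow (?d - 1) ?z @ ?z @ [0]"
    by (simp add: sturm_morph_replicate) (simp add: sturm_morph_def)
  also have "\<dots> = word_pow ?d ?z @ [0]"
    using \<open>0 < ?d\<close> by (simp add: word_pow_pos word_pow_append_commute[symmetric])
  also have "\<dots> = std_word \<alpha> (Suc (Suc 0))" by simp
  finally show ?case by simp
next
  case (3 \<alpha> k)
  let ?a = "cf_digit \<alpha> 1" and ?\<beta> = "cf_rest \<alpha> 1"
  have "cf_digit \<alpha> (Suc k + 2) = cf_digit ?\<beta> (k + 2)"
    using cf_digit_Suc_shift[of "k + 2" \<alpha>] by simp
  then have "std_word \<alpha> (Suc (Suc (Suc k))) =
      word_pow (cf_digit ?\<beta> (k + 2)) (std_word \<alpha> (Suc (Suc k))) @ std_word \<alpha> (Suc k)"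
    using std_word_rec[of \<alpha> "Suc k"] by simp
  also have "\<dots> = sturm_morph ?a (std_word ?\<beta> (Suc (Suc k)))"
    using 3 by (simp del: std_word.simps add: std_word_rec[of ?\<beta> k, simplified])
  finally show ?case .
qed

lemma floor_mult_irrational_less:
  assumes "\<beta> \<notin> \<rat>" "0 < k"
  shows "of_int \<lfloor>real k * \<beta>\<rfloor> < real k * \<beta>"
proof -
  have "of_int \<lfloor>real k * \<beta>\<rfloor> \<noteq> real k * \<beta>"
  proof
    assume eq: "of_int \<lfloor>real k * \<beta>\<rfloor> = real k * \<beta>"
    have "\<beta> = of_int \<lfloor>real k * \<beta>\<rfloor> / real k" using assms(2) by (subst eq) simp
    then show False using assms(1) by (metis Rats_divide Rats_of_int Rats_of_nat)
  qed
  then show ?thesis using of_int_floor_le[of "real k * \<beta>"] by linarith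
qed

lemma sum_list_char_word:
  assumes "0 \<le> \<beta>" "\<beta> < 1"
  shows "sum_list (mech_word \<beta> \<beta> N) = nat \<lfloor>real (N + 1) * \<beta>\<rfloor>"
proof (induction N)
  case 0
  then show ?case using assms by (simp add: mech_word_def floor_eq_iff)
next
  case (Suc N)
  have "real (N + 1) * \<beta> \<le> real (N + 2) * \<beta>" using assms by (intro mult_right_mono) auto
  then have "\<lfloor>real (N + 1) * \<beta>\<rfloor> \<le> \<lfloor>real (N + 2) * \<beta>\<rfloor>" by (rule floor_mono)
  moreover have "0 \<le> \<lfloor>real (N + 1) * \<beta>\<rfloor>" using assms by simp
  ultimately have "nat \<lfloor>real (N + 1) * \<beta>\<rfloor> + nat (\<lfloor>real (N + 2) * \<beta>\<rfloor> - \<lfloor>real (N + 1) * \<beta>\<rfloor>)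
      = nat \<lfloor>real (N + 2) * \<beta>\<rfloor>"
    by (subst nat_add_distrib[symmetric]) auto
  moreover have "mech_letter \<beta> (\<beta> + real N * \<beta>)
      = nat (\<lfloor>real (N + 2) * \<beta>\<rfloor> - \<lfloor>real (N + 1) * \<beta>\<rfloor>)"
    by (simp add: mech_letter_def algebra_simps)
  ultimately show ?case using Suc by (simp add: mech_word_Suc)
qed

(* For \<alpha> = 1/(a + \<beta>), the image of the letter c at index N of c_\<beta> is the block of c_\<alpha>
   starting at index M = a N + \<lfloor>(N + 1) \<beta>\<rfloor>; the floors \<lfloor>(M + j) \<alpha>\<rfloor> computed here
   determine that block. *)
lemma floor_char_block:
  fixes a N j :: nat and \<beta> :: real
  assumes "0 < a" "irrational_unit \<beta>" "0 < j"
    and "j \<le> a + 1 + mech_letter \<beta> (\<beta> + real N * \<beta>)"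
  shows "\<lfloor>real (a * N + nat \<lfloor>real (N + 1) * \<beta>\<rfloor> + j) / (a + \<beta>)\<rfloor>
    = int N + (if j \<le> a then 0 else 1)"
proof -
  define f where "f = \<lfloor>real (N + 1) * \<beta>\<rfloor>"
  have \<beta>: "\<beta> \<notin> \<rat>" "0 < \<beta>" "\<beta> < 1" using assms(2) by (auto simp: irrational_unit_def)
  have f: "of_int f < real N * \<beta> + \<beta>" "real N * \<beta> + \<beta> < of_int f + 1"
    using floor_mult_irrational_less[OF \<beta>(1), of "N + 1"]
      real_of_int_floor_add_one_gt[of "real (N + 1) * \<beta>"]
    by (simp_all add: f_def algebra_simps)
  have "0 \<le> f" using \<beta> by (simp add: f_def)
  have long_block: "of_int f + 1 < real N * \<beta> + 2 * \<beta>" if "a + 2 \<le> j"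
  proof -
    have "f + 1 \<le> \<lfloor>real (N + 2) * \<beta>\<rfloor>"
      using assms(4) that by (simp add: mech_letter_def f_def algebra_simps)
    then have "of_int f + 1 \<le> real_of_int \<lfloor>real (N + 2) * \<beta>\<rfloor>" by simp
    moreover have "real (N + 2) * \<beta> = real N * \<beta> + 2 * \<beta>" by (simp add: algebra_simps)
    ultimately show ?thesis using floor_mult_irrational_less[OF \<beta>(1), of "N + 2"] by linarith
  qed
  have "mech_letter \<beta> (\<beta> + real N * \<beta>) \<le> 1"
    using \<beta> by (simp add: mech_letter_eq_if)
  then have "j \<le> a \<or> j = a + 1 \<or> j = a + 2" using assms(4) by linarith
  then have "real_of_int (int N + (if j \<le> a then 0 else 1)) * (a + \<beta>) \<le> real a * N + f + j \<and>
      real a * N + f + j < (real_of_int (int N + (if j \<le> a then 0 else 1)) + 1) * (a + \<beta>)"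
    using long_block assms(1,3) f \<beta>(2) by (auto simp: algebra_simps)
  moreover have "real (a * N + nat f + j) = real a * N + f + j" using \<open>0 \<le> f\<close> by simp
  ultimately show ?thesis
    unfolding f_def[symmetric] using \<beta>(2)
    by (simp add: floor_eq_iff pos_le_divide_eq pos_divide_less_eq)
qed

lemma mech_word_char_block:
  fixes a N :: nat and \<alpha> \<beta> :: real
  assumes "0 < a" "irrational_unit \<beta>" "\<alpha> = 1 / (a + \<beta>)"
  defines "M \<equiv> a * N + nat \<lfloor>real (N + 1) * \<beta>\<rfloor>" and "c \<equiv> mech_letter \<beta> (\<beta> + real N * \<beta>)"
  shows "mech_word \<alpha> (\<alpha> + real M * \<alpha>) (a + c) = replicate (a - 1) 0 @ 1 # replicate c 0"
proof (rule nth_equalityI)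
  have fl: "\<lfloor>real (M + j) * \<alpha>\<rfloor> = int N + (if j \<le> a then 0 else 1)"
    if "0 < j" "j \<le> a + 1 + c" for j
    using floor_char_block[OF assms(1,2) that[unfolded c_def]] assms(3) by (simp add: M_def)
  fix i assume "i < length (mech_word \<alpha> (\<alpha> + real M * \<alpha>) (a + c))"
  then have i: "i < a + c" by simp
  have "\<alpha> + real M * \<alpha> + real i * \<alpha> = real (M + (i + 1)) * \<alpha>"
    "real (M + (i + 1)) * \<alpha> + \<alpha> = real (M + (i + 2)) * \<alpha>" by (simp_all add: algebra_simps)
  then have "mech_word \<alpha> (\<alpha> + real M * \<alpha>) (a + c) ! i
      = nat (\<lfloor>real (M + (i + 2)) * \<alpha>\<rfloor> - \<lfloor>real (M + (i + 1)) * \<alpha>\<rfloor>)"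
    using i by (simp add: nth_mech_word mech_letter_def)
  also have "\<dots> = (if i = a - 1 then 1 else 0)"
    using fl[of "i + 2"] fl[of "i + 1"] i assms(1) by auto
  also have "\<dots> = (replicate (a - 1) 0 @ 1 # replicate c 0) ! i"
    using i assms(1) by (auto simp: nth_append nth_Cons')
  finally show "mech_word \<alpha> (\<alpha> + real M * \<alpha>) (a + c) ! i
      = (replicate (a - 1) 0 @ 1 # replicate c 0) ! i" .
qed (use assms(1) in simp)

lemma sturm_morph_char_word:
  assumes "0 < a" "irrational_unit \<beta>" "\<alpha> = 1 / (a + \<beta>)"
  shows "sturm_morph a (mech_word \<beta> \<beta> N)
    = mech_word \<alpha> \<alpha> (length (sturm_morph a (mech_word \<beta> \<beta> N)))"
proof (induction N)
  case 0
  show ?case by (simp add: sturm_morph_def mech_word_def)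
next
  case (Suc N)
  let ?c = "mech_letter \<beta> (\<beta> + real N * \<beta>)" and ?M = "a * N + nat \<lfloor>real (N + 1) * \<beta>\<rfloor>"
  have "0 \<le> \<beta>" "\<beta> < 1" using assms(2) by (auto simp: irrational_unit_def)
  then have len: "length (sturm_morph a (mech_word \<beta> \<beta> N)) = ?M"
    using assms(1) by (simp add: length_sturm_morph sum_list_char_word)
  have "sturm_morph a (mech_word \<beta> \<beta> (Suc N))
      = sturm_morph a (mech_word \<beta> \<beta> N) @ replicate (a - 1) 0 @ 1 # replicate ?c 0"
    by (simp add: mech_word_Suc sturm_morph_def)
  also have "\<dots> = mech_word \<alpha> \<alpha> ?M @ mech_word \<alpha> (\<alpha> + real ?M * \<alpha>) (a + ?c)"
    using Suc.IH len mech_word_char_block[OF assms, of N] by simp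
  also have "\<dots> = mech_word \<alpha> \<alpha> (?M + (a + ?c))" by (simp add: mech_word_add)
  finally show ?case by (metis length_mech_word)
qed

lemma std_word_char_prefix:
  assumes "irrational_unit \<alpha>" "1 \<le> n"
  shows "std_word \<alpha> n = mech_word \<alpha> \<alpha> (length (std_word \<alpha> n))"
  using assms
proof (induction n arbitrary: \<alpha>)
  case (Suc m)
  let ?a = "cf_digit \<alpha> 1" and ?\<beta> = "cf_rest \<alpha> 1"
  have "0 < ?a" by (rule cf_digit_pos[OF Suc.prems(1)]) simp
  moreover have "irrational_unit ?\<beta>" by (rule irrational_unit_cf_rest[OF Suc.prems(1)])
  moreover have "\<alpha> = 1 / (?a + ?\<beta>)" by (rule cf_first_digit_expansion[OF Suc.prems(1)])
  ultimately have step: "0 < ?a" "irrational_unit ?\<beta>" "\<alpha> = 1 / (?a + ?\<beta>)" .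
  show ?case
  proof (cases "m = 0")
    case True
    let ?c = "mech_letter ?\<beta> ?\<beta>"
    have "\<lfloor>?\<beta>\<rfloor> = 0" using step(2) by (simp add: irrational_unit_def floor_eq_iff)
    then have "mech_word \<alpha> \<alpha> (?a + ?c) = replicate (?a - 1) 0 @ 1 # replicate ?c 0"
      using mech_word_char_block[OF step, of 0] by simp
    then have "mech_word \<alpha> \<alpha> ?a = replicate (?a - 1) 0 @ [1]"
      using take_mech_word[of ?a "?a + ?c" \<alpha> \<alpha>] step(1) by simp
    then show ?thesis using True step(1) by simp
  next
    case False
    have "std_word \<alpha> (Suc m) = sturm_morph ?a (std_word ?\<beta> m)"
      by (rule std_word_sturm_morph[OF Suc.prems(1)])
    also have "\<dots> = sturm_morph ?a (mech_word ?\<beta> ?\<beta> (length (std_word ?\<beta> m)))"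
      using Suc.IH[OF step(2)] False by simp
    also have "\<dots> = mech_word \<alpha> \<alpha> (length \<dots>)"
      by (rule sturm_morph_char_word[OF step])
    finally show ?thesis by (metis length_mech_word)
  qed
qed simp

lemma sublist_std_word_in_W:
  assumes \<alpha>: "irrational_unit \<alpha>" and "1 \<le> k" "u \<noteq> []" "sublist u (std_word \<alpha> k)"
  shows "u \<in> W \<alpha>"
proof -
  have "sublist u (mech_word \<alpha> \<alpha> (length (std_word \<alpha> k)))"
    using assms(4) std_word_char_prefix[OF \<alpha> assms(2)] by simp
  then obtain x where "u = mech_word \<alpha> x (length u)" using sublist_mech_word by blast
  moreover have "0 \<le> \<alpha>" "\<alpha> \<le> 1" using \<alpha> by (auto simp: irrational_unit_def)
  ultimately show ?thesis using W_eq_mech_words assms(3) by auto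
qed

lemma W_sublist_std_word:
  assumes \<alpha>: "irrational_unit \<alpha>" and "w \<in> W \<alpha>" "1 \<le> n"
    and "length w \<le> length (std_word \<alpha> n)"
  shows "sublist w (std_word \<alpha> (n + 2))"
proof -
  obtain N where N: "sublist w (mech_word \<alpha> \<alpha> N)" using W_sublist_char_word[OF assms(1,2)] by blast
  define K where "K = N + n + 2"
  have "N \<le> length (std_word \<alpha> K)" using length_std_word_ge[OF \<alpha>, of K] by (simp add: K_def)
  then have "mech_word \<alpha> \<alpha> N = take N (std_word \<alpha> K)"
    using std_word_char_prefix[OF \<alpha>, of K] by (simp add: K_def take_mech_word)
  then have "sublist w (std_word \<alpha> K)"
    using N by (metis sublist_order.order_trans prefix_imp_sublist take_is_prefix)
  moreover have "n + 2 \<le> K" by (simp add: K_def)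
  ultimately show ?thesis using sublist_std_word_descend[OF \<alpha> assms(3,4)] by blast
qed

lemma W_factor_extension:
  assumes \<alpha>: "irrational_unit \<alpha>" and "sublist w (std_word \<alpha> n)"
  shows "\<exists>x \<in> W \<alpha>. \<exists>y \<in> W \<alpha>. x @ w @ y = std_word \<alpha> (n + 3)
           \<and> length (std_word \<alpha> (n + 1)) \<le> length x \<and> length (std_word \<alpha> (n + 1)) \<le> length y"
proof -
  obtain x y where xy: "x @ w @ y = std_word \<alpha> (n + 3)"
    "length (std_word \<alpha> (n + 1)) \<le> length x" "length (std_word \<alpha> (n + 1)) \<le> length y"
    using std_word_factor_extension[OF assms] by blast
  have "x \<noteq> []" "y \<noteq> []" using xy(2,3) std_word_nonempty[of \<alpha> "n + 1"] by auto
  moreover have "sublist x (std_word \<alpha> (n + 3))" "sublist y (std_word \<alpha> (n + 3))"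
    using xy(1) by (metis sublist_append_rightI, metis sublist_append_leftI append.assoc)
  ultimately have "x \<in> W \<alpha>" "y \<in> W \<alpha>" using sublist_std_word_in_W[OF \<alpha>, of "n + 3"] by simp_all
  then show ?thesis using xy by blast
qed

theorem proposition5:
  fixes \<alpha> :: real
  assumes "\<alpha> \<notin> \<rat>" and "0 < \<alpha>" and "\<alpha> < 1"
  shows "(\<forall>w \<in> W \<alpha>. \<forall>n::nat. n \<ge> 2 \<longrightarrow> length w < length (std_word \<alpha> n)
            \<longrightarrow> sublist w (std_word \<alpha> (n + 2)))
       \<and> (\<forall>w \<in> W \<alpha>. \<forall>n::nat. n \<ge> 1 \<longrightarrow> sublist w (std_word \<alpha> n)
            \<longrightarrow> (\<exists>x \<in> W \<alpha>. \<exists>y \<in> W \<alpha>. x @ w @ y = std_word \<alpha> (n + 3)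
                 \<and> length x \<ge> length (std_word \<alpha> (n + 1))
                 \<and> length y \<ge> length (std_word \<alpha> (n + 1))))"
proof -
  have \<alpha>: "irrational_unit \<alpha>" using assms by (simp add: irrational_unit_def)
  show ?thesis
    using W_sublist_std_word[OF \<alpha>] W_factor_extension[OF \<alpha>]
    by (meson less_imp_le one_le_numeral order_trans)
qed

end
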